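(* Let ${\mathbf X} \in \mathbb{R}^{n \times d}$ be a matrix each of whose rows has Euclidean norm at most $1$, let $\gamma > 0$, and let ${\mathbf X}^*$ be the $\gamma$-smoothed version of ${\mathbf X}$ (defined in the context). Then the leverage scores of ${\mathbf X}^*$ satisfy $\ell_j({\mathbf X}^* ) \le 1/\gamma$ for all $j \in [n]$.
   Context: Write the singular value decomposition ${\mathbf X} = \sum_{k} \sigma_k u_k v_k^T$ with singular values $\sigma_k > 0$. The $\gamma$-smoothed matrix is ${\mathbf X}^* = \sum_{k : \sigma_k \ge \sqrt{\gamma}} \sigma_k u_k v_k^T$, i.e. obtained by discarding all singular values smaller than $\sqrt{\gamma}$. For a matrix ${\mathbf A} \in \mathbb{R}^{n\times d}$ with $j$-th row ${\mathbf A}[j,:]$, the $j$-th leverage score is $\ell_j({\mathbf A}) = {\mathbf A}[j,:]^T ({\mathbf A}^T {\mathbf A})^{+} {\mathbf A}[j,:]$, where $(\cdot)^+$ denotes the Moore–Penrose pseudoinverse. *)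

theory Defs
  imports "HOL-Analysis.Analysis"
begin

definition is_pinv :: "real^'m^'n \<Rightarrow> real^'n^'m \<Rightarrow> bool" where
  "is_pinv A B \<longleftrightarrow> A ** B ** A = A \<and> B ** A ** B = B \<and>
     transpose (A ** B) = A ** B \<and> transpose (B ** A) = B ** A"

definition pinv :: "real^'m^'n \<Rightarrow> real^'n^'m" where
  "pinv A = (THE B. is_pinv A B)"

definition outer :: "real^'n \<Rightarrow> real^'d \<Rightarrow> real^'d^'n" where
  "outer u v = (\<chi> i j. u $ i * v $ j)"

definition leverage :: "real^'d^'n \<Rightarrow> 'n \<Rightarrow> real" where
  "leverage A j = (A $ j) \<bullet> (pinv (transpose A ** A) *v (A $ j))"

definition is_svd :: "real^'d^'n \<Rightarrow> nat \<Rightarrow> (nat \<Rightarrow> real) \<Rightarrow> (nat \<Rightarrow> real^'n) \<Rightarrow> (nat \<Rightarrow> real^'d) \<Rightarrow> bool" where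
  "is_svd X r \<sigma> u v \<longleftrightarrow>
     (\<forall>k<r. \<sigma> k > 0) \<and>
     (\<forall>k<r. \<forall>l<r. u k \<bullet> u l = (if k = l then 1 else 0)) \<and>
     (\<forall>k<r. \<forall>l<r. v k \<bullet> v l = (if k = l then 1 else 0)) \<and>
     X = (\<Sum>k<r. \<sigma> k *\<^sub>R outer (u k) (v k))"

definition smoothed :: "real \<Rightarrow> nat \<Rightarrow> (nat \<Rightarrow> real) \<Rightarrow> (nat \<Rightarrow> real^'n) \<Rightarrow> (nat \<Rightarrow> real^'d) \<Rightarrow> real^'d^'n" where
  "smoothed \<gamma> r \<sigma> u v = (\<Sum>k\<in>{k. k < r \<and> \<sigma> k \<ge> sqrt \<gamma>}. \<sigma> k *\<^sub>R outer (u k) (v k))"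

end

theory Submission
  imports Defs
begin

text \<open>Write \<open>S\<close> for the indices of the kept singular values, so that the smoothed matrix is
  \<open>A = \<Sum>k\<in>S. \<sigma>\<^sub>k u\<^sub>k v\<^sub>k\<^sup>T\<close>. Its pseudoinverse Gram matrix is
  \<open>(A\<^sup>T A)\<^sup>+ = \<Sum>k\<in>S. \<sigma>\<^sub>k\<^sup>-\<^sup>2 v\<^sub>k v\<^sub>k\<^sup>T\<close>, hence
  \<open>\<ell>\<^sub>j(A) = \<Sum>k\<in>S. u\<^sub>k[j]\<^sup>2\<close>. Since \<open>\<sigma>\<^sub>k\<^sup>2 \<ge> \<gamma>\<close> on \<open>S\<close>, this is at most
  \<open>\<gamma>\<^sup>-\<^sup>1 \<Sum>k. \<sigma>\<^sub>k\<^sup>2 u\<^sub>k[j]\<^sup>2 = \<gamma>\<^sup>-\<^sup>1 \<parallel>X[j,:]\<parallel>\<^sup>2 \<le> \<gamma>\<^sup>-\<^sup>1\<close>.\<close>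

definition orthonormal_on :: "'i set \<Rightarrow> ('i \<Rightarrow> 'a::real_inner) \<Rightarrow> bool" where
  "orthonormal_on S v \<longleftrightarrow> (\<forall>k\<in>S. \<forall>l\<in>S. v k \<bullet> v l = (if k = l then 1 else 0))"

lemma orthonormal_on_subset: "orthonormal_on T v \<Longrightarrow> S \<subseteq> T \<Longrightarrow> orthonormal_on S v"
  unfolding orthonormal_on_def by blast

lemma sum_orthonormal_collapse:
  fixes f :: "'i \<Rightarrow> 'a::real_vector"
  assumes "orthonormal_on S q" "finite S" "k \<in> S"
  shows "(\<Sum>l\<in>S. (q k \<bullet> q l) *\<^sub>R f l) = f k"
proof -
  have "(\<Sum>l\<in>S. (q k \<bullet> q l) *\<^sub>R f l) = (\<Sum>l\<in>S. if k = l then f l else 0)"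
    using assms by (intro sum.cong) (auto simp: orthonormal_on_def)
  then show ?thesis
    using assms by simp
qed

lemma inner_orthonormal_sum_right:
  assumes "orthonormal_on S v" "finite S" "k \<in> S"
  shows "v k \<bullet> (\<Sum>l\<in>S. d l *\<^sub>R v l) = d k"
  using sum_orthonormal_collapse[OF assms, of d] by (simp add: inner_sum_right mult.commute)

lemma inner_orthonormal_sums:
  assumes "orthonormal_on S v" "finite S"
  shows "(\<Sum>k\<in>S. c k *\<^sub>R v k) \<bullet> (\<Sum>l\<in>S. d l *\<^sub>R v l) = (\<Sum>k\<in>S. c k * d k)"
  using inner_orthonormal_sum_right[OF assms] by (simp add: inner_sum_left)

lemma sum_matrix_mul: "(\<Sum>k\<in>S. f k) ** (B::'a::semiring_1^'n^'m) = (\<Sum>k\<in>S. f k ** B)"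
  by (simp add: vec_eq_iff matrix_matrix_mult_def sum_distrib_right; subst sum.swap; simp)

lemma matrix_mul_sum: "(B::'a::semiring_1^'n^'m) ** (\<Sum>k\<in>S. f k) = (\<Sum>k\<in>S. B ** f k)"
  by (simp add: vec_eq_iff matrix_matrix_mult_def sum_distrib_left; subst sum.swap; simp)

lemma sum_matrix_vector_mult: "(\<Sum>k\<in>S. f k) *v (x::'a::semiring_1^'n) = (\<Sum>k\<in>S. f k *v x)"
  by (simp add: vec_eq_iff matrix_vector_mult_def sum_distrib_right; subst sum.swap; simp)

lemma transpose_sum: "transpose (\<Sum>k\<in>S. f k) = (\<Sum>k\<in>S. transpose (f k))"
  by (simp add: vec_eq_iff transpose_def)

lemma outer_mult_outer: "outer a b ** outer c d = (b \<bullet> c) *\<^sub>R outer a d"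
  by (simp add: vec_eq_iff matrix_matrix_mult_def outer_def inner_vec_def
      sum_distrib_left sum_distrib_right mult_ac)

lemma transpose_outer: "transpose (outer a b) = outer b a"
  by (simp add: vec_eq_iff transpose_def outer_def mult_ac)

lemma outer_mult_vec: "outer a b *v x = (b \<bullet> x) *\<^sub>R a"
  by (simp add: vec_eq_iff matrix_vector_mult_def outer_def inner_vec_def
      sum_distrib_left sum_distrib_right mult_ac)

lemma outer_nth: "outer a b $ j = (a $ j) *\<^sub>R b"
  by (simp add: vec_eq_iff outer_def)

lemma transpose_sum_outer:
  "transpose (\<Sum>k\<in>S. a k *\<^sub>R outer (p k) (q k)) = (\<Sum>k\<in>S. a k *\<^sub>R outer (q k) (p k))"
  by (simp add: transpose_sum transpose_scalar transpose_outer)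

lemma sum_outer_nth:
  "(\<Sum>k\<in>S. a k *\<^sub>R outer (p k) (q k)) $ j = (\<Sum>k\<in>S. (a k * p k $ j) *\<^sub>R q k)"
  by (simp add: outer_nth)

lemma sum_outer_mult_vec:
  "(\<Sum>k\<in>S. a k *\<^sub>R outer (p k) (q k)) *v x = (\<Sum>k\<in>S. (a k * (q k \<bullet> x)) *\<^sub>R p k)"
  by (simp add: sum_matrix_vector_mult outer_mult_vec flip: scaleR_matrix_vector_assoc)

lemma sum_outer_mult_sum_outer:
  assumes q: "orthonormal_on S q" and S: "finite S"
  shows "(\<Sum>k\<in>S. a k *\<^sub>R outer (p k) (q k)) ** (\<Sum>l\<in>S. b l *\<^sub>R outer (q l) (s l))
       = (\<Sum>k\<in>S. (a k * b k) *\<^sub>R outer (p k) (s k))"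
proof -
  have "(\<Sum>k\<in>S. a k *\<^sub>R outer (p k) (q k)) ** (\<Sum>l\<in>S. b l *\<^sub>R outer (q l) (s l))
      = (\<Sum>k\<in>S. \<Sum>l\<in>S. (q k \<bullet> q l) *\<^sub>R ((a k * b l) *\<^sub>R outer (p k) (s l)))"
    by (subst sum.swap) (simp add: sum_matrix_mul matrix_mul_sum matrix_scalar_ac outer_mult_outer
        scaleR_sum_right mult_ac flip: scalar_matrix_assoc)
  also have "\<dots> = (\<Sum>k\<in>S. (a k * b k) *\<^sub>R outer (p k) (s k))"
    by (rule sum.cong[OF refl]) (rule sum_orthonormal_collapse[OF q S])
  finally show ?thesis .
qed

lemma pinv_eqI:
  assumes "is_pinv A B"
  shows "pinv A = B"
  unfolding pinv_def
proof (rule the_equality)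
  show "is_pinv A B" by (rule assms)
next
  fix C assume "is_pinv A C"
  then have C: "A ** C ** A = A" "C ** A ** C = C"
      "transpose (A ** C) = A ** C" "transpose (C ** A) = C ** A"
    by (auto simp: is_pinv_def)
  have B: "A ** B ** A = A" "B ** A ** B = B"
      "transpose (A ** B) = A ** B" "transpose (B ** A) = B ** A"
    using assms by (auto simp: is_pinv_def)
  have "C = C ** transpose (A ** C)"
    using C by (simp add: matrix_mul_assoc)
  also have "\<dots> = C ** transpose (A ** B ** A ** C)"
    using B by simp
  also have "\<dots> = C ** (transpose (A ** C) ** transpose (A ** B))"
    by (simp add: matrix_transpose_mul matrix_mul_assoc)
  also have "\<dots> = C ** A ** C ** A ** B"
    using B C by (simp add: matrix_mul_assoc)
  finally have CAB: "C = C ** A ** B"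
    using C by simp
  have "B = transpose (B ** A) ** B"
    using B by simp
  also have "\<dots> = transpose (B ** A ** C ** A) ** B"
    using C(1) by (metis matrix_mul_assoc)
  also have "\<dots> = transpose (C ** A) ** transpose (B ** A) ** B"
    by (simp add: matrix_transpose_mul matrix_mul_assoc)
  also have "\<dots> = C ** A ** B ** A ** B"
    using B C by (simp add: matrix_mul_assoc)
  finally show "C = B"
    using B(2) CAB by metis
qed

lemma pinv_sum_outer:
  fixes p :: "'i \<Rightarrow> real^'n" and q :: "'i \<Rightarrow> real^'m"
  assumes p: "orthonormal_on S p" and q: "orthonormal_on S q" and S: "finite S"
    and w: "\<And>k. k \<in> S \<Longrightarrow> w k \<noteq> 0"
  shows "pinv (\<Sum>k\<in>S. w k *\<^sub>R outer (p k) (q k)) = (\<Sum>k\<in>S. inverse (w k) *\<^sub>R outer (q k) (p k))"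
proof (rule pinv_eqI)
  let ?A = "\<Sum>k\<in>S. w k *\<^sub>R outer (p k) (q k)"
  let ?B = "\<Sum>k\<in>S. inverse (w k) *\<^sub>R outer (q k) (p k)"
  have AB: "?A ** ?B = (\<Sum>k\<in>S. 1 *\<^sub>R outer (p k) (p k))"
    using w by (simp add: sum_outer_mult_sum_outer[OF q S])
  have BA: "?B ** ?A = (\<Sum>k\<in>S. 1 *\<^sub>R outer (q k) (q k))"
    using w by (simp add: sum_outer_mult_sum_outer[OF p S] mult.commute)
  show "is_pinv ?A ?B"
    unfolding is_pinv_def AB BA
    by (simp add: sum_outer_mult_sum_outer[OF p S] sum_outer_mult_sum_outer[OF q S]
        transpose_sum_outer del: scaleR_one)
qed

lemma leverage_sum_outer:
  assumes u: "orthonormal_on S u" and v: "orthonormal_on S v" and S: "finite S"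
    and \<sigma>: "\<And>k. k \<in> S \<Longrightarrow> \<sigma> k \<noteq> 0"
  shows "leverage (\<Sum>k\<in>S. \<sigma> k *\<^sub>R outer (u k) (v k)) j = (\<Sum>k\<in>S. (u k $ j)\<^sup>2)"
proof -
  let ?A = "\<Sum>k\<in>S. \<sigma> k *\<^sub>R outer (u k) (v k)"
  have row: "?A $ j = (\<Sum>k\<in>S. (\<sigma> k * u k $ j) *\<^sub>R v k)"
    by (rule sum_outer_nth)
  have "transpose ?A ** ?A = (\<Sum>k\<in>S. (\<sigma> k * \<sigma> k) *\<^sub>R outer (v k) (v k))"
    by (simp add: transpose_sum_outer sum_outer_mult_sum_outer[OF u S])
  then have pinv_gram:
    "pinv (transpose ?A ** ?A) = (\<Sum>k\<in>S. inverse (\<sigma> k * \<sigma> k) *\<^sub>R outer (v k) (v k))"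
    using pinv_sum_outer[OF v v S] \<sigma> by simp
  have "pinv (transpose ?A ** ?A) *v (?A $ j) = (\<Sum>k\<in>S. (inverse (\<sigma> k) * u k $ j) *\<^sub>R v k)"
    unfolding pinv_gram sum_outer_mult_vec row using inner_orthonormal_sum_right[OF v S] \<sigma>
    by (auto simp: field_simps intro!: sum.cong)
  then have "leverage ?A j = (\<Sum>k\<in>S. (\<sigma> k * u k $ j) * (inverse (\<sigma> k) * u k $ j))"
    unfolding leverage_def using inner_orthonormal_sums[OF v S] row by simp
  also have "\<dots> = (\<Sum>k\<in>S. (u k $ j)\<^sup>2)"
    using \<sigma> by (auto simp: field_simps power2_eq_square intro!: sum.cong)
  finally show ?thesis .
qed

lemma norm_sum_outer_nth_squared:
  assumes "orthonormal_on S v" "finite S"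
  shows "(norm ((\<Sum>k\<in>S. \<sigma> k *\<^sub>R outer (u k) (v k)) $ j))\<^sup>2 = (\<Sum>k\<in>S. (\<sigma> k * u k $ j)\<^sup>2)"
  unfolding power2_norm_eq_inner sum_outer_nth inner_orthonormal_sums[OF assms]
  by (simp add: power2_eq_square)

theorem mainTheorem2:
  fixes X :: "real^'d^'n" and \<gamma> :: real and r :: nat
    and \<sigma> :: "nat \<Rightarrow> real" and u :: "nat \<Rightarrow> real^'n" and v :: "nat \<Rightarrow> real^'d"
  assumes rows: "\<And>j. norm (X $ j) \<le> 1"
    and gamma: "\<gamma> > 0"
    and svd: "is_svd X r \<sigma> u v"
  shows "\<forall>j. leverage (smoothed \<gamma> r \<sigma> u v) j \<le> 1 / \<gamma>"
proof
  fix j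
  define S where "S = {k. k < r \<and> \<sigma> k \<ge> sqrt \<gamma>}"
  have S: "S \<subseteq> {..<r}" "finite S"
    by (auto simp: S_def)
  have u: "orthonormal_on {..<r} u" and v: "orthonormal_on {..<r} v"
    and \<sigma>: "\<And>k. k < r \<Longrightarrow> \<sigma> k > 0" and X: "X = (\<Sum>k<r. \<sigma> k *\<^sub>R outer (u k) (v k))"
    using svd by (auto simp: is_svd_def orthonormal_on_def)
  have "leverage (smoothed \<gamma> r \<sigma> u v) j = (\<Sum>k\<in>S. (u k $ j)\<^sup>2)"
    unfolding smoothed_def S_def[symmetric]
    using S \<sigma> by (intro leverage_sum_outer orthonormal_on_subset[OF u] orthonormal_on_subset[OF v])
      (auto dest: less_imp_neq[symmetric])
  also have "\<dots> \<le> (\<Sum>k\<in>S. (\<sigma> k * u k $ j)\<^sup>2 / \<gamma>)"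
  proof (rule sum_mono)
    fix k assume "k \<in> S"
    then have "\<gamma> \<le> (\<sigma> k)\<^sup>2"
      by (simp add: S_def sqrt_le_D)
    then show "(u k $ j)\<^sup>2 \<le> (\<sigma> k * u k $ j)\<^sup>2 / \<gamma>"
      using gamma by (simp add: field_simps mult_right_mono)
  qed
  also have "\<dots> \<le> (\<Sum>k<r. (\<sigma> k * u k $ j)\<^sup>2 / \<gamma>)"
    using S gamma by (intro sum_mono2) auto
  also have "\<dots> = (norm (X $ j))\<^sup>2 / \<gamma>"
    unfolding X norm_sum_outer_nth_squared[OF v finite_lessThan] by (simp add: sum_divide_distrib)
  also have "\<dots> \<le> 1 / \<gamma>"
    using rows[of j] gamma by (simp add: divide_right_mono power_le_one)
  finally show "leverage (smoothed \<gamma> r \<sigma> u v) j \<le> 1 / \<gamma>" .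
qed

end
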